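(* Let $w\in\Sigma^*$ and suppose the bigram graph $G(w)$ has a removable node $r\in\Sigma$. Let $w'=P_r(w)$ be the string obtained from $w$ by deleting all occurrences of the letter $r$. Then $w\in L_{\mathrm{OBST}}$ if and only if $w'\in L_{\mathrm{OBST}}$.
   Context: Let $\Sigma$ be a finite alphabet and $\$\notin\Sigma$; $\Sigma_\$=\Sigma\cup\{\$\}$. The bigram graph $G(w)$ of $w\in\Sigma^*$ is the weighted directed graph on vertex set $\Sigma_\$$ in which the weight $e(u,v)\ge0$ of the edge $(u,v)$ is the number of times $u$ occurs immediately before $v$ in the string $\$w\$$. For $v$ a vertex, $\mathrm{outflow}(v)=\sum_{u\neq v}e(v,u)$. If $e(u,v)>0$ we say $u$ is a parent of $v$ and $v$ is a child of $u$. A vertex $x\neq\$$ is removable in $G(w)$ if: (a) $x$ has exactly one child $b$ other than $x$ itself; (b) no parent of $x$ other than $x$ itself has $b$ as a child; and (c) if $e(x,x)>0$ then $\mathrm{outflow}(x)=1$. For $x\in\Sigma$ write $\Sigma_{\neg x}=\Sigma\setminus\{x\}$. For $x\in\Sigma$ and $a,b\in\Sigma_{\neg x}$ (with $a=b$ allowed) define $I_{x,a,b}=\Sigma^*\,a\,x\,\Sigma_{\neg a}^*\,b\,\Sigma^*$, $J_{x,a,b}=\Sigma^*\,a\,\Sigma_{\neg x}^*\,b\,\Sigma^*$ (regular-expression notation), $K_{x,a,b}=I_{x,a,b}\cap J_{x,a,b}$, and $L_{\mathrm{OBST}}=\bigcup_{x\in\Sigma}\bigcup_{a,b\in\Sigma_{\neg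 x}}K_{x,a,b}$. *)

theory Defs
  imports Main
begin

(* The end marker $ is represented by None; a letter c of Sig by Some c. *)
definition ext_word :: "'a list \<Rightarrow> 'a option list" where
  "ext_word w = None # map Some w @ [None]"

definition bigram_e :: "'a list \<Rightarrow> 'a option \<Rightarrow> 'a option \<Rightarrow> nat" where
  "bigram_e w u v = card {i. Suc i < length (ext_word w) \<and> ext_word w ! i = u \<and> ext_word w ! Suc i = v}"

definition vertices :: "'a set \<Rightarrow> 'a option set" where
  "vertices Sig = insert None (Some ` Sig)"

definition outflow :: "'a set \<Rightarrow> 'a list \<Rightarrow> 'a option \<Rightarrow> nat" where
  "outflow Sig w v = (\<Sum>u\<in>vertices Sig - {v}. bigram_e w v u)"

definition removable :: "'a set \<Rightarrow> 'a list \<Rightarrow> 'a \<Rightarrow> bool" where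
  "removable Sig w x \<longleftrightarrow>
     x \<in> Sig \<and>
     (\<exists>b\<in>vertices Sig. b \<noteq> Some x \<and> bigram_e w (Some x) b > 0 \<and>
        (\<forall>c\<in>vertices Sig. c \<noteq> Some x \<and> bigram_e w (Some x) c > 0 \<longrightarrow> c = b) \<and>
        (\<forall>p\<in>vertices Sig. p \<noteq> Some x \<and> bigram_e w p (Some x) > 0 \<longrightarrow> bigram_e w p b = 0)) \<and>
     (bigram_e w (Some x) (Some x) > 0 \<longrightarrow> outflow Sig w (Some x) = 1)"

definition I_lang :: "'a set \<Rightarrow> 'a \<Rightarrow> 'a \<Rightarrow> 'a \<Rightarrow> 'a list set" where
  "I_lang Sig x a b = {w. \<exists>u v z. u \<in> lists Sig \<and> v \<in> lists (Sig - {a}) \<and> z \<in> lists Sig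
       \<and> w = u @ [a, x] @ v @ [b] @ z}"

definition J_lang :: "'a set \<Rightarrow> 'a \<Rightarrow> 'a \<Rightarrow> 'a \<Rightarrow> 'a list set" where
  "J_lang Sig x a b = {w. \<exists>u v z. u \<in> lists Sig \<and> v \<in> lists (Sig - {x}) \<and> z \<in> lists Sig
       \<and> w = u @ [a] @ v @ [b] @ z}"

definition K_lang :: "'a set \<Rightarrow> 'a \<Rightarrow> 'a \<Rightarrow> 'a \<Rightarrow> 'a list set" where
  "K_lang Sig x a b = I_lang Sig x a b \<inter> J_lang Sig x a b"

definition L_OBST :: "'a set \<Rightarrow> 'a list set" where
  "L_OBST Sig = (\<Union>x\<in>Sig. \<Union>a\<in>Sig - {x}. \<Union>b\<in>Sig - {x}. K_lang Sig x a b)"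

definition proj_del :: "'a \<Rightarrow> 'a list \<Rightarrow> 'a list" where
  "proj_del r w = filter (\<lambda>c. c \<noteq> r) w"

end

theory Submission
  imports Defs
begin

(*
  Since r has the single child \<beta>, deleting r turns every block p r\<dots>r \<beta> of w into p \<beta>
  (with \<beta> = $ at the end of the word). Condition (b) says that no parent of r is ever
  followed by \<beta>, so the adjacencies created by the deletion are new; condition (c) says
  that with a self-loop the exit r \<beta> occurs only once.

  An obstruction (x, a, b) of P_r(w) lifts to w: either it survives unchanged, or its
  adjacency a x was created by the deletion, and then (r, a, b) is an obstruction of w.
  Conversely, in an obstruction of w the letter a cannot be r: the letter following r in a
  shortest J-witness would be the child x, and a self-loop would make the exit r x occur twice.
  If r plays the role of x or of b, the child \<beta> following r becomes adjacent to a in P_r(w),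
  and together with a shortest J-witness it yields an obstruction of P_r(w).
*)

lemma append_Cons_eq_suffix:
  assumes "xs @ a # ys = xs' @ a # ys'" "a \<notin> set ys" "a \<notin> set ys'"
  shows "ys = ys'"
proof -
  have "rev ys @ a # rev xs = rev ys' @ a # rev xs'" using arg_cong[OF assms(1), of rev] by simp
  from arg_cong[OF this, of "takeWhile (\<lambda>c. c \<noteq> a)"]
  have "takeWhile (\<lambda>c. c \<noteq> a) (rev ys) = takeWhile (\<lambda>c. c \<noteq> a) (rev ys')"
    by (simp add: takeWhile_tail)
  moreover have "takeWhile (\<lambda>c. c \<noteq> a) (rev ys) = rev ys" "takeWhile (\<lambda>c. c \<noteq> a) (rev ys') = rev ys'"
    using assms(2,3) by (auto simp: takeWhile_eq_all_conv)
  ultimately show ?thesis by simp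
qed

lemma Cons_eq_snoc_if_all_eq: "\<forall>y\<in>set t. y = x \<Longrightarrow> x # t = t @ [x]"
  by (induction t) auto

lemma filter_eq_appendD:
  assumes "filter P w = xs @ ys"
  obtains w1 w2 where "w = w1 @ w2" "filter P w1 = xs" "filter P w2 = ys"
  using assms
proof (induction xs arbitrary: w thesis)
  case Nil
  then show ?case by (metis append_Nil filter.simps(1))
next
  case (Cons x xs)
  obtain us vs where "w = us @ x # vs" "\<forall>u\<in>set us. \<not> P u" "P x" "xs @ ys = filter P vs"
    using filter_eq_ConsD[of P w x "xs @ ys"] Cons.prems(2) by auto
  moreover obtain v1 v2 where "vs = v1 @ v2" "filter P v1 = xs" "filter P v2 = ys"
    using Cons.IH[of vs] calculation(4) by metis
  ultimately show ?case using Cons.prems(1)[of "us @ x # v1" v2] by auto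
qed

lemma filter_eq_delimited_factorD:
  assumes "filter P w = u @ [a] @ v @ [b] @ z"
  obtains U V Z where "w = U @ [a] @ V @ [b] @ Z" "filter P V = v"
proof -
  have "filter P w = u @ (a # v @ b # z)" using assms by simp
  then obtain w1 w2 where 1: "w = w1 @ w2" "filter P w2 = a # v @ b # z"
    by (blast elim: filter_eq_appendD)
  obtain us vs where 2: "w2 = us @ a # vs" "filter P vs = v @ b # z"
    using filter_eq_ConsD[OF 1(2)] by metis
  obtain V V' where 3: "vs = V @ V'" "filter P V = v" "filter P V' = b # z"
    using filter_eq_appendD[OF 2(2)] by metis
  obtain us' Z where 4: "V' = us' @ b # Z" "\<forall>u\<in>set us'. \<not> P u"
    using filter_eq_ConsD[OF 3(3)] by auto
  show ?thesis using that[of "w1 @ us" "V @ us'" Z] 1 2 3 4 by simp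
qed

lemma first_delimiter:
  assumes "w = u @ p @ v @ [b] @ z"
  obtains v' z' where "w = u @ p @ v' @ [b] @ z'" "set v' \<subseteq> set v" "b \<notin> set v'"
proof (cases "b \<in> set v")
  case True
  then obtain v' q where "v = v' @ b # q" "b \<notin> set v'" by (metis split_list_first)
  then show ?thesis using assms that[of v' "q @ [b] @ z"] by auto
next
  case False
  then show ?thesis using assms that[of v z] by auto
qed

lemma shortest_delimited_factor:
  assumes "w = u @ [a] @ v @ [b] @ z"
  obtains u' v' z' where "w = u' @ [a] @ v' @ [b] @ z'" "set v' \<subseteq> set v"
    "a \<notin> set v'" "b \<notin> set v'"
proof -
  obtain v1 z1 where 1: "w = u @ [a] @ v1 @ [b] @ z1" "set v1 \<subseteq> set v" "b \<notin> set v1"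
    by (rule first_delimiter[OF assms])
  show ?thesis
  proof (cases "a \<in> set v1")
    case True
    then obtain p q where "v1 = p @ a # q" "a \<notin> set q" by (metis split_list_last)
    then show ?thesis using 1 that[of "u @ a # p" q z1] by auto
  next
    case False
    then show ?thesis using 1 that[of u v1 z1] by auto
  qed
qed

definition I_occurs :: "'a list \<Rightarrow> 'a \<Rightarrow> 'a \<Rightarrow> 'a \<Rightarrow> bool" where
  "I_occurs w x a b \<longleftrightarrow> (\<exists>u v z. w = u @ [a, x] @ v @ [b] @ z \<and> a \<notin> set v)"

definition J_occurs :: "'a list \<Rightarrow> 'a \<Rightarrow> 'a \<Rightarrow> 'a \<Rightarrow> bool" where
  "J_occurs w x a b \<longleftrightarrow> (\<exists>u v z. w = u @ [a] @ v @ [b] @ z \<and> x \<notin> set v)"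

definition obstructed :: "'a list \<Rightarrow> bool" where
  "obstructed w \<longleftrightarrow> (\<exists>x a b. a \<noteq> x \<and> b \<noteq> x \<and> I_occurs w x a b \<and> J_occurs w x a b)"

lemma I_occursI: "w = u @ [a, x] @ v @ [b] @ z \<Longrightarrow> a \<notin> set v \<Longrightarrow> I_occurs w x a b"
  unfolding I_occurs_def by blast

lemma J_occursI: "w = u @ [a] @ v @ [b] @ z \<Longrightarrow> x \<notin> set v \<Longrightarrow> J_occurs w x a b"
  unfolding J_occurs_def by blast

lemma obstructedI:
  "a \<noteq> x \<Longrightarrow> b \<noteq> x \<Longrightarrow> I_occurs w x a b \<Longrightarrow> J_occurs w x a b \<Longrightarrow> obstructed w"
  unfolding obstructed_def by blast

lemma I_lang_iff_I_occurs:
  assumes "w \<in> lists Sig"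
  shows "w \<in> I_lang Sig x a b \<longleftrightarrow> I_occurs w x a b"
proof
  assume "w \<in> I_lang Sig x a b"
  then obtain u v z where "v \<in> lists (Sig - {a})" "w = u @ [a, x] @ v @ [b] @ z"
    unfolding I_lang_def by blast
  then show "I_occurs w x a b" by (intro I_occursI) auto
next
  assume "I_occurs w x a b"
  then obtain u v z where "w = u @ [a, x] @ v @ [b] @ z" "a \<notin> set v"
    unfolding I_occurs_def by blast
  with assms show "w \<in> I_lang Sig x a b"
    unfolding I_lang_def by (intro CollectI exI[of _ u] exI[of _ v] exI[of _ z]) auto
qed

lemma J_lang_iff_J_occurs:
  assumes "w \<in> lists Sig"
  shows "w \<in> J_lang Sig x a b \<longleftrightarrow> J_occurs w x a b"
proof
  assume "w \<in> J_lang Sig x a b"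
  then obtain u v z where "v \<in> lists (Sig - {x})" "w = u @ [a] @ v @ [b] @ z"
    unfolding J_lang_def by blast
  then show "J_occurs w x a b" by (intro J_occursI) auto
next
  assume "J_occurs w x a b"
  then obtain u v z where "w = u @ [a] @ v @ [b] @ z" "x \<notin> set v"
    unfolding J_occurs_def by blast
  with assms show "w \<in> J_lang Sig x a b"
    unfolding J_lang_def by (intro CollectI exI[of _ u] exI[of _ v] exI[of _ z]) auto
qed

lemma I_occurs_letters: "I_occurs w x a b \<Longrightarrow> {a, x, b} \<subseteq> set w"
  unfolding I_occurs_def by auto

lemma L_OBST_iff_obstructed:
  assumes "w \<in> lists Sig"
  shows "w \<in> L_OBST Sig \<longleftrightarrow> obstructed w"
proof -
  have "w \<in> L_OBST Sig \<longleftrightarrow>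
      (\<exists>x\<in>Sig. \<exists>a\<in>Sig - {x}. \<exists>b\<in>Sig - {x}. I_occurs w x a b \<and> J_occurs w x a b)"
    unfolding L_OBST_def K_lang_def
    by (simp add: I_lang_iff_I_occurs[OF assms] J_lang_iff_J_occurs[OF assms])
  also have "\<dots> \<longleftrightarrow> obstructed w"
  proof
    assume "obstructed w"
    then obtain x a b where ne: "a \<noteq> x" "b \<noteq> x" and I: "I_occurs w x a b" and J: "J_occurs w x a b"
      unfolding obstructed_def by blast
    have "{a, x, b} \<subseteq> Sig" using I_occurs_letters[OF I] assms by auto
    then show "\<exists>x\<in>Sig. \<exists>a\<in>Sig - {x}. \<exists>b\<in>Sig - {x}. I_occurs w x a b \<and> J_occurs w x a b"
      using ne I J by blast
  qed (auto simp: obstructed_def)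
  finally show ?thesis .
qed

lemma obstructed_if_adjacent_inside:
  assumes "w = u @ [a, c] @ z" "w = u' @ [a] @ v @ [b] @ z'" "a \<notin> set v"
    and "c \<in> set (v @ [b])" "hd (v @ [b]) \<noteq> c"
  shows "obstructed w"
proof -
  obtain p q where pq: "v @ [b] = p @ c # q" "c \<notin> set p"
    using assms(4) by (metis split_list_first)
  have "set p \<subseteq> set v" using pq(1) by (cases q rule: rev_cases) auto
  obtain d p' where p: "p = d # p'" using assms(5) pq(1) by (cases p) auto
  have "w = u' @ [a, d] @ p' @ [c] @ (q @ z')"
    using assms(2) pq(1) p by (metis append.assoc append_Cons append_Nil)
  then have "I_occurs w d a c" by (rule I_occursI) (use \<open>set p \<subseteq> set v\<close> assms(3) p in auto)
  moreover have "J_occurs w d a c" using assms(1) by (intro J_occursI[of _ u _ "[]"]) simp_all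
  moreover have "a \<noteq> d" "c \<noteq> d" using \<open>set p \<subseteq> set v\<close> assms(3) pq(2) p by auto
  ultimately show ?thesis by (intro obstructedI)
qed

lemma proj_del_simps [simp]:
  "proj_del r [] = []"
  "proj_del r (c # xs) = (if c = r then proj_del r xs else c # proj_del r xs)"
  "proj_del r (xs @ ys) = proj_del r xs @ proj_del r ys"
  unfolding proj_del_def by simp_all

lemma set_proj_del [simp]: "set (proj_del r xs) = set xs - {r}"
  unfolding proj_del_def by auto

lemma proj_del_id: "r \<notin> set xs \<Longrightarrow> proj_del r xs = xs"
  unfolding proj_del_def by (auto simp: filter_id_conv)

lemma proj_del_all_eq: "\<forall>y\<in>set xs. y = r \<Longrightarrow> proj_del r xs = []"
  unfolding proj_del_def by simp

lemma I_occurs_proj_del: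
  assumes "I_occurs w x a b" "r \<notin> {a, x, b}"
  shows "I_occurs (proj_del r w) x a b"
proof -
  obtain u v z where w: "w = u @ [a, x] @ v @ [b] @ z" and a: "a \<notin> set v"
    using assms(1) unfolding I_occurs_def by blast
  from w assms(2) have "proj_del r w = proj_del r u @ [a, x] @ proj_del r v @ [b] @ proj_del r z"
    by auto
  then show ?thesis by (rule I_occursI) (use a in simp)
qed

lemma J_occurs_proj_del:
  assumes "J_occurs w x a b" "r \<notin> {a, b}"
  shows "J_occurs (proj_del r w) x a b"
proof -
  obtain u v z where w: "w = u @ [a] @ v @ [b] @ z" and x: "x \<notin> set v"
    using assms(1) unfolding J_occurs_def by blast
  from w assms(2) have "proj_del r w = proj_del r u @ [a] @ proj_del r v @ [b] @ proj_del r z"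
    by auto
  then show ?thesis by (rule J_occursI) (use x in simp)
qed

lemma finite_bigram_positions:
  "finite {i. Suc i < length (ext_word w) \<and> ext_word w ! i = u \<and> ext_word w ! Suc i = v}"
  by (rule finite_subset[of _ "{..<length (ext_word w)}"]) auto

lemma bigram_position:
  assumes "ext_word w = s @ [u, v] @ t"
  shows "length s \<in> {i. Suc i < length (ext_word w) \<and> ext_word w ! i = u \<and> ext_word w ! Suc i = v}"
  using assms by (simp add: nth_append)

lemma bigram_e_pos: "ext_word w = s @ [u, v] @ t \<Longrightarrow> 0 < bigram_e w u v"
  unfolding bigram_e_def using bigram_position finite_bigram_positions
  by (subst card_gt_0_iff) blast

lemma bigram_e_ge_2:
  assumes "ext_word w = s @ [u, v] @ t" "ext_word w = s' @ [u, v] @ t'" "length s \<noteq> length s'"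
  shows "2 \<le> bigram_e w u v"
proof -
  have "{length s, length s'} \<subseteq>
      {i. Suc i < length (ext_word w) \<and> ext_word w ! i = u \<and> ext_word w ! Suc i = v}"
    using bigram_position[OF assms(1)] bigram_position[OF assms(2)] by blast
  from card_mono[OF finite_bigram_positions this] show ?thesis
    using assms(3) unfolding bigram_e_def by simp
qed

lemma bigram_e_letters_pos: "w = s @ [p, q] @ t \<Longrightarrow> 0 < bigram_e w (Some p) (Some q)"
  by (rule bigram_e_pos[of _ "None # map Some s" _ _ "map Some t @ [None]"]) (simp add: ext_word_def)

lemma bigram_e_last_pos: "w = s @ [p] \<Longrightarrow> 0 < bigram_e w (Some p) None"
  by (rule bigram_e_pos[of _ "None # map Some s" _ _ "[]"]) (simp add: ext_word_def)

lemma bigram_e_le_outflow: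
  assumes "finite Sig" "u \<in> vertices Sig" "u \<noteq> v"
  shows "bigram_e w v u \<le> outflow Sig w v"
  unfolding outflow_def using assms by (intro member_le_sum) (auto simp: vertices_def)

(* Conditions (a)-(c) of removability with the child b of (a) named \<beta>; only the uniqueness
   half of (a) is needed. *)
locale removable_letter =
  fixes Sig :: "'a set" and w :: "'a list" and r :: 'a and \<beta> :: "'a option"
  assumes finite_Sig: "finite Sig"
    and word_in_lists: "w \<in> lists Sig"
    and unique_child:
      "\<And>c. c \<in> vertices Sig \<Longrightarrow> c \<noteq> Some r \<Longrightarrow> 0 < bigram_e w (Some r) c \<Longrightarrow> c = \<beta>"
    and parents_avoid_child:
      "\<And>p. p \<in> vertices Sig \<Longrightarrow> p \<noteq> Some r \<Longrightarrow> 0 < bigram_e w p (Some r) \<Longrightarrow> bigram_e w p \<beta> = 0"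
    and self_loop_outflow: "0 < bigram_e w (Some r) (Some r) \<Longrightarrow> outflow Sig w (Some r) = 1"

lemma removable_letterI:
  assumes "finite Sig" "w \<in> lists Sig" "removable Sig w r"
  obtains \<beta> where "removable_letter Sig w r \<beta>"
proof -
  from assms(3) obtain \<beta> where
    child: "\<forall>c\<in>vertices Sig. c \<noteq> Some r \<and> 0 < bigram_e w (Some r) c \<longrightarrow> c = \<beta>" and
    parents: "\<forall>p\<in>vertices Sig. p \<noteq> Some r \<and> 0 < bigram_e w p (Some r) \<longrightarrow> bigram_e w p \<beta> = 0" and
    loop: "0 < bigram_e w (Some r) (Some r) \<longrightarrow> outflow Sig w (Some r) = 1"
    unfolding removable_def by (elim conjE bexE) (rule that, assumption+)
  show ?thesis
  proof (rule that, unfold_locales)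
    show "c = \<beta>" if "c \<in> vertices Sig" "c \<noteq> Some r" "0 < bigram_e w (Some r) c" for c
      using child that by blast
    show "bigram_e w p \<beta> = 0" if "p \<in> vertices Sig" "p \<noteq> Some r" "0 < bigram_e w p (Some r)" for p
      using parents that by blast
  qed (use assms(1,2) loop in simp_all)
qed

context removable_letter
begin

lemma letter_vertex: "w = s @ c # t \<Longrightarrow> Some c \<in> vertices Sig"
  using word_in_lists by (auto simp: vertices_def)

lemma child_after_r:
  assumes "w = s @ [r, c] @ t" "c \<noteq> r"
  shows "\<beta> = Some c"
  using unique_child[of "Some c"] bigram_e_letters_pos[OF assms(1)] letter_vertex[of "s @ [r]" c t] assms
  by auto

lemma child_after_r_run:
  assumes "w = s @ r # t1 @ c # t2" "\<forall>y\<in>set t1. y = r" "c \<noteq> r"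
  shows "\<beta> = Some c"
proof -
  have "w = s @ (r # t1) @ c # t2" using assms(1) by simp
  also have "\<dots> = (s @ t1) @ [r, c] @ t2" using Cons_eq_snoc_if_all_eq[OF assms(2)] by simp
  finally show ?thesis using child_after_r assms(3) by blast
qed

lemma child_None_if_trailing_r:
  assumes "w = s @ r # t" "\<forall>y\<in>set t. y = r"
  shows "\<beta> = None"
proof -
  have "w = (s @ t) @ [r]" using assms(1) Cons_eq_snoc_if_all_eq[OF assms(2)] by simp
  from bigram_e_last_pos[OF this] show ?thesis using unique_child[of None] by (auto simp: vertices_def)
qed

lemma first_non_r_is_child:
  assumes "w = s @ r # t @ t'" "y \<in> set t" "y \<noteq> r"
  obtains t1 c t2 where "t = t1 @ c # t2" "\<forall>y\<in>set t1. y = r" "c \<noteq> r" "\<beta> = Some c"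
proof -
  obtain t1 c t2 where t: "t = t1 @ c # t2" "c \<noteq> r" "\<forall>y\<in>set t1. \<not> y \<noteq> r"
    using split_list_first_prop[of t "\<lambda>y. y \<noteq> r"] assms(2,3) by blast
  then have "\<beta> = Some c" using assms(1) by (intro child_after_r_run[of s t1 c "t2 @ t'"]) auto
  then show ?thesis using that t by blast
qed

lemma parent_not_before_child:
  assumes "w = s @ [p, r] @ t" "p \<noteq> r" "w = s' @ [p, c] @ t'"
  shows "\<beta> \<noteq> Some c"
  using parents_avoid_child[of "Some p"] bigram_e_letters_pos[OF assms(1)]
    bigram_e_letters_pos[OF assms(3)] letter_vertex[of s p "r # t"] assms(1,2) by auto

lemma self_loop_exit_unique:
  assumes "0 < bigram_e w (Some r) (Some r)"
    and "w = s @ [r, c] @ t" "w = s' @ [r, c] @ t'" "c \<noteq> r"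
  shows "length s = length s'"
proof (rule ccontr)
  assume "length s \<noteq> length s'"
  moreover have e: "ext_word w = (None # map Some s) @ [Some r, Some c] @ map Some t @ [None]"
    using assms(2) by (simp add: ext_word_def)
  moreover have e': "ext_word w = (None # map Some s') @ [Some r, Some c] @ map Some t' @ [None]"
    using assms(3) by (simp add: ext_word_def)
  ultimately have "2 \<le> bigram_e w (Some r) (Some c)"
    by (intro bigram_e_ge_2[OF e e']) simp
  moreover have "bigram_e w (Some r) (Some c) \<le> outflow Sig w (Some r)"
    using finite_Sig letter_vertex[of "s @ [r]" c t] assms(2,4) by (intro bigram_e_le_outflow) auto
  ultimately show False using self_loop_outflow[OF assms(1)] by simp
qed

lemma r_run_then_child:
  assumes "w = s @ r # t"
  obtains (suffix) "\<forall>y\<in>set t. y = r" "\<beta> = None"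
    | (child) t1 c t2 where "t = t1 @ c # t2" "\<forall>y\<in>set t1. y = r" "c \<noteq> r" "\<beta> = Some c"
proof (cases "\<forall>y\<in>set t. y = r")
  case True
  then show ?thesis using suffix child_None_if_trailing_r[OF assms] by blast
next
  case False
  then obtain y where "y \<in> set t" "y \<noteq> r" by blast
  then show ?thesis using first_non_r_is_child[of s t "[]"] assms child by auto
qed

lemma no_r_after_exit_if_self_loop:
  assumes "0 < bigram_e w (Some r) (Some r)" "w = u @ [r, c] @ v @ [r] @ z" "c \<noteq> r"
  shows False
proof -
  have c: "\<beta> = Some c" using child_after_r[OF assms(2,3)] .
  have "w = (u @ [r, c] @ v) @ r # z" using assms(2) by simp
  then show False
  proof (cases rule: r_run_then_child)
    case suffix
    then show False using c by simp
  next
    case (child t1 c' t2)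
    have "r # t1 = t1 @ [r]" using Cons_eq_snoc_if_all_eq[OF child(2)] .
    then have "w = (u @ [r, c] @ v @ t1) @ [r, c] @ t2" using assms(2) child(1,4) c by simp
    then have "length (u @ [r, c] @ v @ t1) = length u"
      using self_loop_exit_unique[OF assms(1) _ assms(2)] assms(3) by blast
    then show False by simp
  qed
qed

lemma first_letter_ne_r:
  assumes "I_occurs w x a b" "J_occurs w x a b" "a \<noteq> x" "b \<noteq> x"
  shows "a \<noteq> r"
proof
  assume a: "a = r"
  obtain u v z where I: "w = u @ [r, x] @ v @ [b] @ z"
    using assms(1) a unfolding I_occurs_def by blast
  have x: "\<beta> = Some x" using child_after_r[OF I] assms(3) a by simp
  obtain u1 v1 z1 where J1: "w = u1 @ [r] @ v1 @ [b] @ z1" "x \<notin> set v1"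
    using assms(2) a unfolding J_occurs_def by blast
  obtain u' v' z' where J: "w = u' @ [r] @ v' @ [b] @ z'" "set v' \<subseteq> set v1" "r \<notin> set v'"
    by (rule shortest_delimited_factor[OF J1(1)])
  show False
  proof (cases v')
    case (Cons c v'')
    then have "\<beta> = Some c" using J child_after_r[of u' c "v'' @ [b] @ z'"] by auto
    then show False using x J(2) J1(2) Cons by auto
  next
    case Nil
    then have rb: "w = u' @ [r, b] @ z'" using J by simp
    show False
    proof (cases "b = r")
      case True
      then have "0 < bigram_e w (Some r) (Some r)" using bigram_e_letters_pos[OF rb] by simp
      then show False using no_r_after_exit_if_self_loop I True assms(3) a by blast
    qed (use child_after_r[OF rb] x assms(4) in simp)
  qed
qed

lemma obstructed_proj_del_if_middle_r:
  assumes "I_occurs w r a b" "J_occurs w r a b" "a \<noteq> r" "b \<noteq> r"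
  shows "obstructed (proj_del r w)"
proof -
  obtain u v z where I: "w = u @ [a, r] @ v @ [b] @ z" "a \<notin> set v"
    using assms(1) unfolding I_occurs_def by blast
  obtain u1 v1 z1 where J1: "w = u1 @ [a] @ v1 @ [b] @ z1" "r \<notin> set v1"
    using assms(2) unfolding J_occurs_def by blast
  obtain u2 v2 z2 where J: "w = u2 @ [a] @ v2 @ [b] @ z2" "set v2 \<subseteq> set v1" "a \<notin> set v2"
    by (rule shortest_delimited_factor[OF J1(1)])
  obtain t1 c t2 where t: "v @ [b] = t1 @ c # t2" "\<forall>y\<in>set t1. y = r" "c \<noteq> r" "\<beta> = Some c"
    by (rule first_non_r_is_child[of "u @ [a]" "v @ [b]" z b]) (use I assms(4) in simp_all)
  have not_adj: "w \<noteq> s @ [a, c] @ s'" for s s'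
    using parent_not_before_child[of u a "v @ [b] @ z"] I(1) assms(3) t(4) by auto
  have "w = u @ [a, r] @ (t1 @ c # t2) @ z" using I(1) t(1) by simp
  then have Fw: "proj_del r w = proj_del r u @ [a, c] @ proj_del r t2 @ proj_del r z"
    using assms(3) t(2,3) by (simp add: proj_del_all_eq)
  have "r \<notin> set v2" using J(2) J1(2) by auto
  then have FJ: "proj_del r w = proj_del r u2 @ [a] @ v2 @ [b] @ proj_del r z2"
    using J(1) assms(3,4) by (simp add: proj_del_id)
  show ?thesis
  proof (cases "c \<in> set (v2 @ [b])")
    case True
    have "w = u2 @ [a, hd (v2 @ [b])] @ tl (v2 @ [b]) @ z2" using J(1) by (cases v2) simp_all
    then have "hd (v2 @ [b]) \<noteq> c" using not_adj by auto
    then show ?thesis by (rule obstructed_if_adjacent_inside[OF Fw FJ J(3) True])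
  next
    case False
    have "proj_del r v @ [b] = c # proj_del r t2"
      using arg_cong[OF t(1), of "proj_del r"] assms(4) t(2,3) by (simp add: proj_del_all_eq)
    then obtain v' where v': "proj_del r v = c # v'" "proj_del r t2 = v' @ [b]"
      using False by (cases "proj_del r v") auto
    have "set (proj_del r v) \<subseteq> set v" by simp
    then have "c \<in> set v" "set v' \<subseteq> set v" using v'(1) by auto
    moreover have "proj_del r w = proj_del r u @ [a, c] @ v' @ [b] @ proj_del r z"
      using Fw v'(2) by simp
    ultimately have "I_occurs (proj_del r w) c a b" using I(2) by (blast intro: I_occursI)
    moreover have "J_occurs (proj_del r w) c a b" using FJ False by (intro J_occursI) auto
    ultimately show ?thesis using False I(2) \<open>c \<in> set v\<close> by (intro obstructedI) auto
  qed
qed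

lemma common_exit_after_last_r:
  assumes I: "w = u @ [a, x] @ v @ [r] @ z" "r \<notin> set v" "a \<notin> set v"
    and J: "w = u' @ [a] @ v' @ [r] @ z'" "r \<notin> set v'" "a \<notin> set v'" "x \<notin> set v'"
    and "a \<noteq> x" "a \<noteq> r" "x \<noteq> r"
  obtains c t t' where "\<beta> = Some c"
    "proj_del r w = proj_del r u @ [a, x] @ v @ [c] @ t"
    "proj_del r w = proj_del r u' @ [a] @ v' @ [c] @ t'"
proof -
  have FI: "proj_del r w = proj_del r u @ a # x # v @ proj_del r z"
    using I(1,2) assms(9,10) by (simp add: proj_del_id)
  have FJ: "proj_del r w = proj_del r u' @ a # v' @ proj_del r z'"
    using J(1,2) assms(9) by (simp add: proj_del_id)
  have I': "w = (u @ [a, x] @ v) @ r # z" and J': "w = (u' @ [a] @ v') @ r # z'"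
    using I(1) J(1) by simp_all
  from I' show ?thesis
  proof (cases rule: r_run_then_child)
    case suffix
    from J' show ?thesis
    proof (cases rule: r_run_then_child)
      case suffix
      have "proj_del r u @ a # x # v = proj_del r w"
        using FI \<open>\<forall>y\<in>set z. y = r\<close> by (simp add: proj_del_all_eq)
      also have "\<dots> = proj_del r u' @ a # v'"
        using FJ suffix(1) by (simp add: proj_del_all_eq)
      finally have "x # v = v'" by (rule append_Cons_eq_suffix) (use I(3) J(3) assms(8) in auto)
      then show ?thesis using J(4) by auto
    qed (use \<open>\<beta> = None\<close> in simp)
  next
    case (child t1 c t2)
    note t = this
    from J' obtain s1 s2 where s: "z' = s1 @ c # s2" "\<forall>y\<in>set s1. y = r"
    proof (cases rule: r_run_then_child)
      case (child s1 c' s2)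
      then show ?thesis using that[of s1 s2] t(4) by simp
    qed (use t(4) in simp)
    show ?thesis
    proof (rule that[OF t(4)])
      show "proj_del r w = proj_del r u @ [a, x] @ v @ [c] @ proj_del r t2"
        using FI t(1-3) by (simp add: proj_del_all_eq)
      show "proj_del r w = proj_del r u' @ [a] @ v' @ [c] @ proj_del r s2"
        using FJ s t(3) by (simp add: proj_del_all_eq)
    qed
  qed
qed

lemma obstructed_proj_del_if_last_r:
  assumes "I_occurs w x a r" "J_occurs w x a r" "a \<noteq> x" "a \<noteq> r" "x \<noteq> r"
  shows "obstructed (proj_del r w)"
proof -
  obtain u v0 z0 where I0: "w = u @ [a, x] @ v0 @ [r] @ z0" "a \<notin> set v0"
    using assms(1) unfolding I_occurs_def by blast
  obtain v z where I: "w = u @ [a, x] @ v @ [r] @ z" "set v \<subseteq> set v0" "r \<notin> set v"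
    by (rule first_delimiter[OF I0(1)])
  obtain u1 v1 z1 where J1: "w = u1 @ [a] @ v1 @ [r] @ z1" "x \<notin> set v1"
    using assms(2) unfolding J_occurs_def by blast
  obtain u2 v2 z2 where J: "w = u2 @ [a] @ v2 @ [r] @ z2" "set v2 \<subseteq> set v1" "a \<notin> set v2" "r \<notin> set v2"
    by (rule shortest_delimited_factor[OF J1(1)])
  have av: "a \<notin> set v" and xv2: "x \<notin> set v2" using I(2) I0(2) J(2) J1(2) by auto
  obtain c t t' where c: "\<beta> = Some c"
    and Fc: "proj_del r w = proj_del r u @ [a, x] @ v @ [c] @ t"
    and Fc2: "proj_del r w = proj_del r u2 @ [a] @ v2 @ [c] @ t'"
    by (rule common_exit_after_last_r[OF I(1,3) av J(1,4,3) xv2 assms(3-5)])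
  show ?thesis
  proof (cases "c = x")
    case True
    have "hd (v2 @ [x]) \<noteq> x"
    proof (cases v2)
      case Nil
      then have "w = u2 @ [a, r] @ z2" using J(1) by simp
      from parent_not_before_child[OF this assms(4) I(1)] show ?thesis using c True by simp
    qed (use xv2 in auto)
    moreover have Fx: "proj_del r w = proj_del r u @ [a, x] @ (v @ [c] @ t)" using Fc by simp
    moreover have Fx2: "proj_del r w = proj_del r u2 @ [a] @ v2 @ [x] @ t'" using Fc2 True by simp
    ultimately show ?thesis by (intro obstructed_if_adjacent_inside[OF Fx Fx2 J(3)]) simp_all
  next
    case False
    show ?thesis
      by (rule obstructedI[OF _ _ I_occursI[OF Fc av] J_occursI[OF Fc2 xv2]]) (use assms(3) False in auto)
  qed
qed

lemma r_notin_if_child_notin: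
  assumes "\<beta> = Some x" "w = u @ v @ b # z" "x \<notin> set v" "b \<noteq> x" "b \<noteq> r"
  shows "r \<notin> set v"
proof
  assume "r \<in> set v"
  then obtain p q where "v = p @ r # q" by (metis split_list)
  then have "w = (u @ p) @ r # (q @ [b]) @ z" using assms(2) by simp
  then obtain t1 c t2 where "q @ [b] = t1 @ c # t2" "\<beta> = Some c"
    by (rule first_non_r_is_child[where y = b]) (use assms(5) in simp_all)
  then have "x \<in> set (q @ [b])" using assms(1) by (metis in_set_conv_decomp option.inject)
  then show False using assms(3,4) \<open>v = p @ r # q\<close> by auto
qed

lemma obstructed_if_obstructed_proj_del:
  assumes "obstructed (proj_del r w)"
  shows "obstructed w"
proof -
  obtain x a b u v z u2 v2 z2 where ne: "a \<noteq> x" "b \<noteq> x"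
    and I0: "proj_del r w = u @ [a] @ (x # v) @ [b] @ z" "a \<notin> set v"
    and J0: "proj_del r w = u2 @ [a] @ v2 @ [b] @ z2" "x \<notin> set v2"
    using assms unfolding obstructed_def I_occurs_def J_occurs_def by auto
  have "a \<in> set (proj_del r w)" "x \<in> set (proj_del r w)" "b \<in> set (proj_del r w)"
    using I0(1) by simp_all
  then have nr: "a \<noteq> r" "x \<noteq> r" "b \<noteq> r" by auto
  obtain U V Z where "w = U @ [a] @ V @ [b] @ Z" "filter (\<lambda>c. c \<noteq> r) V = x # v"
    using I0(1) unfolding proj_del_def by (rule filter_eq_delimited_factorD)
  then obtain R V' where I: "w = U @ [a] @ R @ x # V' @ [b] @ Z" "\<forall>y\<in>set R. y = r"
    and V': "filter (\<lambda>c. c \<noteq> r) V' = v"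
    by (auto dest!: filter_eq_ConsD)
  have aV': "a \<notin> set V'" using V' I0(2) nr(1) by auto
  obtain U2 V2 Z2 where J: "w = U2 @ [a] @ V2 @ [b] @ Z2" "filter (\<lambda>c. c \<noteq> r) V2 = v2"
    using J0(1) unfolding proj_del_def by (rule filter_eq_delimited_factorD)
  have xV2: "x \<notin> set V2" using J(2) J0(2) nr(2) by auto
  show ?thesis
  proof (cases R)
    case Nil
    then have "w = U @ [a, x] @ V' @ [b] @ Z" using I(1) by simp
    then show ?thesis by (rule obstructedI[OF ne I_occursI[OF _ aV'] J_occursI[OF J(1) xV2]])
  next
    case (Cons r' R')
    then have R: "R = r # R'" "\<forall>y\<in>set R'. y = r" using I(2) by auto
    have x: "\<beta> = Some x"
      using I(1) R nr(2) by (intro child_after_r_run[of "U @ [a]" R' x "V' @ [b] @ Z"]) auto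
    have "w = (U2 @ [a]) @ V2 @ b # Z2" using J(1) by simp
    from r_notin_if_child_notin[OF x this xV2 ne(2) nr(3)] have "r \<notin> set V2" .
    then have "J_occurs w r a b" using J_occursI[OF J(1)] by blast
    moreover have "w = U @ [a, r] @ (R' @ x # V') @ [b] @ Z" "a \<notin> set (R' @ x # V')"
      using I(1) R aV' ne(1) nr(1) by auto
    then have "I_occurs w r a b" by (rule I_occursI)
    ultimately show ?thesis using nr by (blast intro: obstructedI)
  qed
qed

lemma obstructed_proj_del_iff: "obstructed (proj_del r w) \<longleftrightarrow> obstructed w"
proof
  assume "obstructed w"
  then obtain x a b where ne: "a \<noteq> x" "b \<noteq> x" and I: "I_occurs w x a b" and J: "J_occurs w x a b"
    unfolding obstructed_def by blast
  have "a \<noteq> r" using first_letter_ne_r[OF I J ne] .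
  consider "x = r" | "b = r" | "r \<notin> {a, x, b}" using \<open>a \<noteq> r\<close> by blast
  then show "obstructed (proj_del r w)"
  proof cases
    case 1
    then show ?thesis using obstructed_proj_del_if_middle_r I J \<open>a \<noteq> r\<close> ne by blast
  next
    case 2
    then show ?thesis using obstructed_proj_del_if_last_r I J \<open>a \<noteq> r\<close> ne by blast
  next
    case 3
    then show ?thesis using ne I_occurs_proj_del[OF I] J_occurs_proj_del[OF J] by (blast intro: obstructedI)
  qed
qed (rule obstructed_if_obstructed_proj_del)

end

theorem lemma2:
  fixes Sig :: "'a set" and w :: "'a list" and r :: 'a
  assumes "finite Sig"
    and "w \<in> lists Sig"
    and "r \<in> Sig"
    and "removable Sig w r"
  shows "w \<in> L_OBST Sig \<longleftrightarrow> proj_del r w \<in> L_OBST Sig"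
proof -
  obtain \<beta> where "removable_letter Sig w r \<beta>"
    using removable_letterI[OF assms(1,2,4)] .
  then interpret removable_letter Sig w r \<beta> .
  have "proj_del r w \<in> lists Sig" using assms(2) by (auto simp: proj_del_def)
  then show ?thesis
    using assms(2) by (simp add: L_OBST_iff_obstructed obstructed_proj_del_iff)
qed

end
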